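(* Let $J_0\in\mathbb{R}^{3\times3}$ be a symmetric positive definite (inertia) matrix and consider the rigid body attitude dynamics $$\frac{d}{dt}(J\omega)=\tau,\qquad J=RJ_0R^{\mathsf T},\qquad \dot R=\hat\omega R=R\hat\Omega,$$ with $R\in\mathsf{SO}(3)$, $\omega,\Omega\in\mathbb{R}^3$ (inertial and body-fixed angular velocity), and control moment $\tau\in\mathbb{R}^3$. Let $G_E=\mathrm{diag}[\epsilon_1,\epsilon_2,\epsilon_3]$ with $\epsilon_1,\epsilon_2,\epsilon_3$ distinct positive constants, and let $k_E,k_v>0$. Consider the observer with state $(\bar R,\bar\omega)\in\mathsf{SO}(3)\times\mathbb{R}^3$, $$\frac{d}{dt}(J\bar\omega)=\tau+\tfrac12 k_E J^{-1}e_{R_E},\qquad \dot{\bar R}=\big[Q_E^{\mathsf T}(\bar\omega+k_vJ^{-1}e_{R_E})\big]^\wedge\bar R,$$ where $$Q_E=R\bar R^{\mathsf T},\quad \Psi_E=\tfrac12\mathrm{tr}[G_E(I_{3\times3}-Q_E)],\quad e_{R_E}=\tfrac12(Q_EG_E-G_EQ_E^{\mathsf T})^\vee,\quad e_{\omega_E}=J\omega-J\bar\omega.$$ Define $$\omega_E=\omega-\bar\omega-k_vJ^{-1}e_{R_E},\qquad E_o(R,\bar R)=\tfrac12\big(\mathrm{tr}[Q_EG_E]I_{3\times3}-2\hat e_{R_E}-G_EQ_E^{\mathsf T}\big).$$ Then: (i) $\Psi_E$ is positive definite about $R=\bar R$ (i.e., $\Psi_E\ge0$ with equality only when $Q_E=I_{3\times3}$).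 (ii) Let $n_1=\min\{\epsilon_1+\epsilon_2,\epsilon_2+\epsilon_3,\epsilon_3+\epsilon_1\}$, $n_2=\max\{(\epsilon_1-\epsilon_2)^2,(\epsilon_2-\epsilon_3)^2,(\epsilon_3-\epsilon_1)^2\}$, $n_3=\max\{(\epsilon_1+\epsilon_2)^2,(\epsilon_2+\epsilon_3)^2,(\epsilon_3+\epsilon_1)^2\}$, $n_4=\max\{\epsilon_1+\epsilon_2,\epsilon_2+\epsilon_3,\epsilon_3+\epsilon_1\}$, $n_5=\min\{(\epsilon_1+\epsilon_2)^2,(\epsilon_2+\epsilon_3)^2,(\epsilon_3+\epsilon_1)^2\}$, and let $\psi_E<n_1$ be a constant. Then $$\frac{n_1}{n_2+n_3}\|e_{R_E}\|^2\le\Psi_E\le\frac{n_1n_4}{n_5(n_1-\psi_E)}\|e_{R_E}\|^2,$$ where the upper bound holds whenever $\Psi_E<\psi_E$. (iii) $\dot Q_E=\hat\omega_EQ_E$. (iv) $\dot\Psi_E=\omega_E^{\mathsf T}e_{R_E}$. (v) $\dot e_{R_E}=E_o(R,\bar R)\,\omega_E$. (vi) $\dot e_{\omega_E}=-\tfrac12k_EJ^{-1}e_{R_E}$.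
   Context: $\mathsf{SO}(3)=\{R\in\mathbb{R}^{3\times3}: R^{\mathsf T}R=I,\ \det R=1\}$. The hat map $\wedge:\mathbb{R}^3\to\mathfrak{so}(3)$ sends $x$ to the skew-symmetric matrix $\hat x$ with $\hat x y=x\times y$ for all $y\in\mathbb{R}^3$; $\vee$ is its inverse. $R$ maps body-fixed frame representations to the inertial frame; $\bar R$ is the attitude of an estimate frame. All derivatives are along solutions of the dynamics and observer above. *)

theory Defs
  imports "HOL-Analysis.Analysis"
begin

definition SO3 :: "(real^3^3) set" where
  "SO3 = {R. transpose R ** R = mat 1 \<and> det R = 1}"

definition hat :: "real^3 \<Rightarrow> real^3^3" where
  "hat x = (\<chi> i j. (cross3 x (axis j 1)) $ i)"

text \<open>Vee map: inverse of the hat map on skew-symmetric matrices.\<close>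
definition vee :: "real^3^3 \<Rightarrow> real^3" where
  "vee M = vector [M$3$2, M$1$3, M$2$1]"

definition diag3 :: "real \<Rightarrow> real \<Rightarrow> real \<Rightarrow> real^3^3" where
  "diag3 a b c = (\<chi> i j. if i = j then (if i = 1 then a else if i = 2 then b else c) else 0)"

definition QE :: "real^3^3 \<Rightarrow> real^3^3 \<Rightarrow> real^3^3" where
  "QE R Rb = R ** transpose Rb"

definition PsiE :: "real^3^3 \<Rightarrow> real^3^3 \<Rightarrow> real^3^3 \<Rightarrow> real" where
  "PsiE G R Rb = (1/2) * trace (G ** (mat 1 - QE R Rb))"

definition eRE :: "real^3^3 \<Rightarrow> real^3^3 \<Rightarrow> real^3^3 \<Rightarrow> real^3" where
  "eRE G R Rb = (1/2) *\<^sub>R vee (QE R Rb ** G - G ** transpose (QE R Rb))"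

definition Eo :: "real^3^3 \<Rightarrow> real^3^3 \<Rightarrow> real^3^3 \<Rightarrow> real^3^3" where
  "Eo G R Rb = (1/2) *\<^sub>R (trace (QE R Rb ** G) *\<^sub>R mat 1 - 2 *\<^sub>R hat (eRE G R Rb)
                              - G ** transpose (QE R Rb))"

end

theory Submission
  imports Defs
begin

text \<open>
  Write \<open>w\<^sub>k = 1 + 2 (Q\<^sub>E)\<^sub>k\<^sub>k - tr Q\<^sub>E\<close>; for a rotation these are four times the squared vector
  components of its unit quaternion, and \<open>1 + tr Q\<^sub>E\<close> is four times the squared scalar component.
  Then \<open>4 \<Psi>\<^sub>E = \<Sum>\<^sub>k (\<epsilon>\<^sub>i + \<epsilon>\<^sub>j) w\<^sub>k\<close> and
  \<open>16 \<parallel>e\<^sub>R\<^sub>E\<parallel>\<^sup>2 = (1 + tr Q\<^sub>E) \<Sum>\<^sub>k (\<epsilon>\<^sub>i + \<epsilon>\<^sub>j)\<^sup>2 w\<^sub>k + \<Sum>\<^sub>k (\<epsilon>\<^sub>i - \<epsilon>\<^sub>j)\<^sup>2 w\<^sub>i w\<^sub>j\<close>,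
  with \<open>{i, j, k} = {1, 2, 3}\<close> in each summand, so both quantities are comparable with \<open>3 - tr Q\<^sub>E = \<Sum>\<^sub>k w\<^sub>k \<ge> 0\<close>; the factor \<open>1 + tr Q\<^sub>E\<close>
  is kept away from \<open>0\<close> by the sublevel condition \<open>\<Psi>\<^sub>E < \<psi>\<^sub>E < n\<^sub>1\<close>.

  The kinematic identities (iii)--(vi) follow from the product rule for \<open>Q\<^sub>E = R R\<^sup>T\<close>, the
  conjugation rule \<open>Q (Q\<^sup>T v)\<^sup>\<and> = v\<^sup>\<and> Q\<close> and, \<open>G\<^sub>E\<close> being symmetric, the identities
  \<open>tr (x\<^sup>\<and> M) = - x \<bullet> (M - M\<^sup>T)\<^sup>\<or>\<close> and \<open>(x\<^sup>\<and> M + M\<^sup>T x\<^sup>\<and>)\<^sup>\<or> = (tr M I - M) x\<close> for \<open>M = Q\<^sub>E G\<^sub>E\<close>.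
\<close>

section \<open>Rotation matrices and their Euler--Rodrigues weights\<close>

lemma SO3_iff_rotation_matrix: "Q \<in> SO3 \<longleftrightarrow> rotation_matrix Q"
  unfolding SO3_def rotation_matrix_def orthogonal_matrix by simp

lemma QE_in_SO3: "R1 \<in> SO3 \<Longrightarrow> R2 \<in> SO3 \<Longrightarrow> QE R1 R2 \<in> SO3"
  unfolding SO3_iff_rotation_matrix rotation_matrix_def QE_def
  by (simp add: orthogonal_matrix_mul orthogonal_matrix_transpose det_mul det_transpose)

lemma SO3_entry_identities:
  fixes Q :: "real^3^3"
  assumes "Q \<in> SO3"
  shows "Q$1$1^2 + Q$2$1^2 + Q$3$1^2 = 1" "Q$1$2^2 + Q$2$2^2 + Q$3$2^2 = 1"
    "Q$1$3^2 + Q$2$3^2 + Q$3$3^2 = 1"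
    "Q$1$1*Q$1$2 + Q$2$1*Q$2$2 + Q$3$1*Q$3$2 = 0" "Q$1$1*Q$1$3 + Q$2$1*Q$2$3 + Q$3$1*Q$3$3 = 0"
    "Q$1$2*Q$1$3 + Q$2$2*Q$2$3 + Q$3$2*Q$3$3 = 0"
    "Q$1$1^2 + Q$1$2^2 + Q$1$3^2 = 1" "Q$2$1^2 + Q$2$2^2 + Q$2$3^2 = 1"
    "Q$3$1^2 + Q$3$2^2 + Q$3$3^2 = 1"
    "Q$1$1*Q$2$1 + Q$1$2*Q$2$2 + Q$1$3*Q$2$3 = 0" "Q$1$1*Q$3$1 + Q$1$2*Q$3$2 + Q$1$3*Q$3$3 = 0"
    "Q$2$1*Q$3$1 + Q$2$2*Q$3$2 + Q$2$3*Q$3$3 = 0"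
    "Q$1$1*(Q$2$2*Q$3$3 - Q$2$3*Q$3$2) - Q$1$2*(Q$2$1*Q$3$3 - Q$2$3*Q$3$1)
       + Q$1$3*(Q$2$1*Q$3$2 - Q$2$2*Q$3$1) = 1"
proof -
  have rot: "transpose Q ** Q = mat 1" "Q ** transpose Q = mat 1" "det Q = 1"
    using assms unfolding SO3_iff_rotation_matrix rotation_matrix_def orthogonal_matrix_def by auto
  have col: "(transpose Q ** Q)$i$j = mat 1$i$j" and row: "(Q ** transpose Q)$i$j = mat 1$i$j" for i j
    using rot by simp_all
  show "Q$1$1^2 + Q$2$1^2 + Q$3$1^2 = 1" "Q$1$2^2 + Q$2$2^2 + Q$3$2^2 = 1"
    "Q$1$3^2 + Q$2$3^2 + Q$3$3^2 = 1"
    "Q$1$1*Q$1$2 + Q$2$1*Q$2$2 + Q$3$1*Q$3$2 = 0" "Q$1$1*Q$1$3 + Q$2$1*Q$2$3 + Q$3$1*Q$3$3 = 0"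
    "Q$1$2*Q$1$3 + Q$2$2*Q$2$3 + Q$3$2*Q$3$3 = 0"
    using col[of 1 1] col[of 2 2] col[of 3 3] col[of 1 2] col[of 1 3] col[of 2 3]
    by (simp_all add: matrix_matrix_mult_def sum_3 transpose_def mat_def power2_eq_square)
  show "Q$1$1^2 + Q$1$2^2 + Q$1$3^2 = 1" "Q$2$1^2 + Q$2$2^2 + Q$2$3^2 = 1"
    "Q$3$1^2 + Q$3$2^2 + Q$3$3^2 = 1"
    "Q$1$1*Q$2$1 + Q$1$2*Q$2$2 + Q$1$3*Q$2$3 = 0" "Q$1$1*Q$3$1 + Q$1$2*Q$3$2 + Q$1$3*Q$3$3 = 0"
    "Q$2$1*Q$3$1 + Q$2$2*Q$3$2 + Q$2$3*Q$3$3 = 0"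
    using row[of 1 1] row[of 2 2] row[of 3 3] row[of 1 2] row[of 1 3] row[of 2 3]
    by (simp_all add: matrix_matrix_mult_def sum_3 transpose_def mat_def power2_eq_square)
  show "Q$1$1*(Q$2$2*Q$3$3 - Q$2$3*Q$3$2) - Q$1$2*(Q$2$1*Q$3$3 - Q$2$3*Q$3$1)
       + Q$1$3*(Q$2$1*Q$3$2 - Q$2$2*Q$3$1) = 1"
    using rot(3) by (simp add: det_3 algebra_simps)
qed

lemma rotation_entries_rodrigues:
  fixes q11 q12 q13 q21 q22 q23 q31 q32 q33 :: real
  assumes col: "q11^2 + q21^2 + q31^2 = 1" "q12^2 + q22^2 + q32^2 = 1" "q13^2 + q23^2 + q33^2 = 1"
      "q11*q12 + q21*q22 + q31*q32 = 0" "q11*q13 + q21*q23 + q31*q33 = 0" "q12*q13 + q22*q23 + q32*q33 = 0"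
    and row: "q11^2 + q12^2 + q13^2 = 1" "q21^2 + q22^2 + q23^2 = 1" "q31^2 + q32^2 + q33^2 = 1"
      "q11*q21 + q12*q22 + q13*q23 = 0" "q11*q31 + q12*q32 + q13*q33 = 0" "q21*q31 + q22*q32 + q23*q33 = 0"
    and det: "q11*(q22*q33 - q23*q32) - q12*(q21*q33 - q23*q31) + q13*(q21*q32 - q22*q31) = 1"
  defines "x0 \<equiv> 1 + (q11 + q22 + q33)" and "x1 \<equiv> 1 + q11 - q22 - q33"
    and "x2 \<equiv> 1 - q11 + q22 - q33" and "x3 \<equiv> 1 - q11 - q22 + q33"
  shows "(q32 - q23)^2 = x0 * x1" "(q13 - q31)^2 = x0 * x2" "(q21 - q12)^2 = x0 * x3"
    "(q23 + q32)^2 = x2 * x3" "(q13 + q31)^2 = x3 * x1" "(q12 + q21)^2 = x1 * x2"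
    "q32^2 - q23^2 = q13^2 - q31^2" "q13^2 - q31^2 = q21^2 - q12^2"
proof -
  have cof: "q11 = q22*q33 - q23*q32" "q21 = q13*q32 - q12*q33" "q31 = q12*q23 - q13*q22"
      "q12 = q23*q31 - q21*q33" "q22 = q11*q33 - q13*q31" "q32 = q13*q21 - q11*q23"
      "q13 = q21*q32 - q22*q31" "q23 = q12*q31 - q11*q32" "q33 = q11*q22 - q12*q21"
    using col(1,4,5) det apply algebra
    using col(1,4,5) det apply algebra
    using col(1,4,5) det apply algebra
    using col(2,4,6) det apply algebra
    using col(2,4,6) det apply algebra
    using col(2,4,6) det apply algebra
    using col(3,5,6) det apply algebra
    using col(3,5,6) det apply algebra
    using col(3,5,6) det apply algebra
    done
  note orth = col row cof
  show "(q32 - q23)^2 = x0 * x1" unfolding x0_def x1_def using orth by algebra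
  show "(q13 - q31)^2 = x0 * x2" unfolding x0_def x2_def using orth by algebra
  show "(q21 - q12)^2 = x0 * x3" unfolding x0_def x3_def using orth by algebra
  show "(q23 + q32)^2 = x2 * x3" unfolding x2_def x3_def using orth by algebra
  show "(q13 + q31)^2 = x3 * x1" unfolding x3_def x1_def using orth by algebra
  show "(q12 + q21)^2 = x1 * x2" unfolding x1_def x2_def using orth by algebra
  show "q32^2 - q23^2 = q13^2 - q31^2" using col(3) row(3) by algebra
  show "q13^2 - q31^2 = q21^2 - q12^2" using col(1) row(1) by algebra
qed

lemma nonneg_if_pairwise_products_nonneg:
  fixes x0 x1 x2 x3 :: real
  assumes sum: "0 < x0 + x1 + x2 + x3"
    and "0 \<le> x0 * x1" "0 \<le> x0 * x2" "0 \<le> x0 * x3" "0 \<le> x1 * x2" "0 \<le> x1 * x3" "0 \<le> x2 * x3"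
  shows "0 \<le> x0" "0 \<le> x1" "0 \<le> x2" "0 \<le> x3"
proof -
  have "0 \<le> x0 * (x0 + x1 + x2 + x3)" "0 \<le> x1 * (x0 + x1 + x2 + x3)"
    "0 \<le> x2 * (x0 + x1 + x2 + x3)" "0 \<le> x3 * (x0 + x1 + x2 + x3)"
    using assms by (simp_all add: distrib_left mult.commute)
  then show "0 \<le> x0" "0 \<le> x1" "0 \<le> x2" "0 \<le> x3"
    using sum by (simp_all add: zero_le_mult_iff)
qed

text \<open>For the rotation by the angle \<open>\<theta>\<close> about the unit axis \<open>n\<close>, \<open>rodrigues_weight Q k = 4 sin\<^sup>2(\<theta>/2) n\<^sub>k\<^sup>2\<close>
  and \<open>1 + trace Q = 4 cos\<^sup>2(\<theta>/2)\<close>.\<close>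
definition rodrigues_weight :: "real^3^3 \<Rightarrow> 3 \<Rightarrow> real" where
  "rodrigues_weight Q k = 1 + 2 * Q$k$k - trace Q"

lemma trace_3: "trace (Q :: real^3^3) = Q$1$1 + Q$2$2 + Q$3$3"
  by (simp add: trace_def sum_3)

lemma rodrigues_weight_3:
  "rodrigues_weight Q 1 = 1 + Q$1$1 - Q$2$2 - Q$3$3"
  "rodrigues_weight Q 2 = 1 - Q$1$1 + Q$2$2 - Q$3$3"
  "rodrigues_weight Q 3 = 1 - Q$1$1 - Q$2$2 + Q$3$3"
  by (simp_all add: rodrigues_weight_def trace_3)

lemma sum_rodrigues_weight: "rodrigues_weight Q 1 + rodrigues_weight Q 2 + rodrigues_weight Q 3 = 3 - trace Q"
  by (simp add: rodrigues_weight_3 trace_3)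

lemma SO3_rodrigues_products:
  fixes Q :: "real^3^3"
  assumes "Q \<in> SO3"
  defines "w \<equiv> rodrigues_weight Q"
  shows "(Q$3$2 - Q$2$3)^2 = (1 + trace Q) * w 1" "(Q$1$3 - Q$3$1)^2 = (1 + trace Q) * w 2"
    "(Q$2$1 - Q$1$2)^2 = (1 + trace Q) * w 3"
    "(Q$2$3 + Q$3$2)^2 = w 2 * w 3" "(Q$1$3 + Q$3$1)^2 = w 3 * w 1" "(Q$1$2 + Q$2$1)^2 = w 1 * w 2"
    "Q$3$2^2 - Q$2$3^2 = Q$1$3^2 - Q$3$1^2" "Q$1$3^2 - Q$3$1^2 = Q$2$1^2 - Q$1$2^2"
  using rotation_entries_rodrigues[OF SO3_entry_identities[OF assms(1)]]
  by (simp_all only: w_def rodrigues_weight_3 trace_3)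

lemma SO3_rodrigues_weight_nonneg:
  assumes "Q \<in> SO3"
  shows "0 \<le> 1 + trace Q" and "0 \<le> rodrigues_weight Q k"
proof -
  define w where "w = rodrigues_weight Q"
  note R = SO3_rodrigues_products[OF assms, folded w_def]
  have sum: "0 < (1 + trace Q) + w 1 + w 2 + w 3"
    by (simp add: w_def rodrigues_weight_3 trace_3)
  have products: "0 \<le> (1 + trace Q) * w 1" "0 \<le> (1 + trace Q) * w 2" "0 \<le> (1 + trace Q) * w 3"
      "0 \<le> w 1 * w 2" "0 \<le> w 1 * w 3" "0 \<le> w 2 * w 3"
    using R(1-6) zero_le_power2 by (metis mult.commute)+
  note nonneg = nonneg_if_pairwise_products_nonneg[OF sum products]
  then show "0 \<le> 1 + trace Q" by simp
  have "\<forall>k. 0 \<le> w k" using nonneg by (simp add: forall_3)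
  then show "0 \<le> rodrigues_weight Q k" by (simp add: w_def)
qed

lemma SO3_trace_le_3:
  assumes "Q \<in> SO3"
  shows "trace Q \<le> 3"
  using SO3_rodrigues_weight_nonneg(2)[OF assms, of 1] SO3_rodrigues_weight_nonneg(2)[OF assms, of 2]
    SO3_rodrigues_weight_nonneg(2)[OF assms, of 3]
  by (simp add: rodrigues_weight_3 trace_3)

lemma SO3_eq_mat_1_iff_trace:
  assumes Q: "Q \<in> SO3"
  shows "Q = mat 1 \<longleftrightarrow> trace Q = 3"
proof
  assume "trace Q = 3"
  moreover note w = SO3_rodrigues_weight_nonneg(2)[OF Q]
  ultimately have "rodrigues_weight Q 1 = 0" "rodrigues_weight Q 2 = 0" "rodrigues_weight Q 3 = 0"
    using w[of 1] w[of 2] w[of 3] by (simp_all add: rodrigues_weight_3 trace_3)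
  moreover note R = SO3_rodrigues_products[OF Q]
  ultimately have "Q$3$2 - Q$2$3 = 0" "Q$1$3 - Q$3$1 = 0" "Q$2$1 - Q$1$2 = 0"
    "Q$2$3 + Q$3$2 = 0" "Q$1$3 + Q$3$1 = 0" "Q$1$2 + Q$2$1 = 0"
    by simp_all
  with \<open>rodrigues_weight Q 1 = 0\<close> \<open>rodrigues_weight Q 2 = 0\<close> \<open>rodrigues_weight Q 3 = 0\<close>
  show "Q = mat 1"
    by (simp add: vec_eq_iff forall_3 mat_def rodrigues_weight_3)
qed (simp add: trace_I)

section \<open>The attitude error function and the attitude error vector\<close>

lemma PsiE_diag3_rodrigues:
  fixes R1 R2 :: "real^3^3"
  defines "w \<equiv> rodrigues_weight (QE R1 R2)"
  shows "4 * PsiE (diag3 e1 e2 e3) R1 R2 = (e2 + e3) * w 1 + (e3 + e1) * w 2 + (e1 + e2) * w 3"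
  unfolding w_def rodrigues_weight_3 PsiE_def
  by (simp add: trace_def sum_3 matrix_matrix_mult_def diag3_def mat_def algebra_simps)

lemma norm_eRE_diag3_rodrigues:
  fixes R1 R2 :: "real^3^3"
  assumes Q: "QE R1 R2 \<in> SO3"
  defines "w \<equiv> rodrigues_weight (QE R1 R2)"
  shows "16 * (norm (eRE (diag3 e1 e2 e3) R1 R2))^2
    = (1 + trace (QE R1 R2)) * ((e2 + e3)^2 * w 1 + (e3 + e1)^2 * w 2 + (e1 + e2)^2 * w 3)
      + (e2 - e3)^2 * (w 2 * w 3) + (e3 - e1)^2 * (w 3 * w 1) + (e1 - e2)^2 * (w 1 * w 2)"
proof -
  define Q where "Q = QE R1 R2"
  note R = SO3_rodrigues_products[OF Q, folded Q_def w_def]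
  \<comment> \<open>\<open>2 (\<epsilon>\<^sub>j Q\<^sub>j\<^sub>k - \<epsilon>\<^sub>k Q\<^sub>k\<^sub>j) = (\<epsilon>\<^sub>j + \<epsilon>\<^sub>k) (Q\<^sub>j\<^sub>k - Q\<^sub>k\<^sub>j) + (\<epsilon>\<^sub>j - \<epsilon>\<^sub>k) (Q\<^sub>j\<^sub>k + Q\<^sub>k\<^sub>j)\<close>; the
    cross terms cancel because the three differences \<open>Q\<^sub>j\<^sub>k\<^sup>2 - Q\<^sub>k\<^sub>j\<^sup>2\<close> coincide\<close>
  have "16 * (norm (eRE (diag3 e1 e2 e3) R1 R2))^2
      = 4 * ((e2 * Q$3$2 - e3 * Q$2$3)^2 + (e3 * Q$1$3 - e1 * Q$3$1)^2 + (e1 * Q$2$1 - e2 * Q$1$2)^2)"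
    unfolding power2_norm_eq_inner Q_def
    by (simp add: inner_vec_def sum_3 eRE_def vee_def matrix_matrix_mult_def diag3_def
        transpose_def power2_eq_square field_simps)
  also have "\<dots> = (e2 + e3)^2 * (Q$3$2 - Q$2$3)^2 + (e2 - e3)^2 * (Q$2$3 + Q$3$2)^2
      + (e3 + e1)^2 * (Q$1$3 - Q$3$1)^2 + (e3 - e1)^2 * (Q$1$3 + Q$3$1)^2
      + (e1 + e2)^2 * (Q$2$1 - Q$1$2)^2 + (e1 - e2)^2 * (Q$1$2 + Q$2$1)^2
      + 2 * ((e2^2 - e3^2) * (Q$3$2^2 - Q$2$3^2) + (e3^2 - e1^2) * (Q$1$3^2 - Q$3$1^2)
             + (e1^2 - e2^2) * (Q$2$1^2 - Q$1$2^2))"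
    by (simp add: power2_eq_square algebra_simps)
  also have "(e2^2 - e3^2) * (Q$3$2^2 - Q$2$3^2) + (e3^2 - e1^2) * (Q$1$3^2 - Q$3$1^2)
             + (e1^2 - e2^2) * (Q$2$1^2 - Q$1$2^2) = 0"
    unfolding R(7,8) by (simp add: algebra_simps)
  finally show ?thesis
    unfolding R(1-6) Q_def[symmetric] by (simp add: algebra_simps)
qed

lemma PsiE_diag3_trace_bounds:
  fixes R1 R2 :: "real^3^3"
  assumes Q: "QE R1 R2 \<in> SO3"
  shows "\<lbrakk>c \<le> e2 + e3; c \<le> e3 + e1; c \<le> e1 + e2\<rbrakk>
      \<Longrightarrow> c * (3 - trace (QE R1 R2)) \<le> 4 * PsiE (diag3 e1 e2 e3) R1 R2"
    and "\<lbrakk>e2 + e3 \<le> C; e3 + e1 \<le> C; e1 + e2 \<le> C\<rbrakk>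
      \<Longrightarrow> 4 * PsiE (diag3 e1 e2 e3) R1 R2 \<le> C * (3 - trace (QE R1 R2))"
proof -
  define w where "w = rodrigues_weight (QE R1 R2)"
  have w: "0 \<le> w 1" "0 \<le> w 2" "0 \<le> w 3"
    unfolding w_def by (simp_all add: SO3_rodrigues_weight_nonneg[OF Q])
  note Psi = PsiE_diag3_rodrigues[of e1 e2 e3 R1 R2, folded w_def]
  note S = sum_rodrigues_weight[of "QE R1 R2", folded w_def, symmetric]
  show "c * (3 - trace (QE R1 R2)) \<le> 4 * PsiE (diag3 e1 e2 e3) R1 R2"
    if "c \<le> e2 + e3" "c \<le> e3 + e1" "c \<le> e1 + e2"
    using mult_right_mono[OF that(1) w(1)] mult_right_mono[OF that(2) w(2)]
      mult_right_mono[OF that(3) w(3)]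
    unfolding Psi S by (simp add: algebra_simps)
  show "4 * PsiE (diag3 e1 e2 e3) R1 R2 \<le> C * (3 - trace (QE R1 R2))"
    if "e2 + e3 \<le> C" "e3 + e1 \<le> C" "e1 + e2 \<le> C"
    using mult_right_mono[OF that(1) w(1)] mult_right_mono[OF that(2) w(2)]
      mult_right_mono[OF that(3) w(3)]
    unfolding Psi S by (simp add: algebra_simps)
qed

lemma norm_eRE_diag3_trace_bounds:
  fixes R1 R2 :: "real^3^3"
  assumes Q: "QE R1 R2 \<in> SO3"
  shows "\<lbrakk>c \<le> (e2 + e3)^2; c \<le> (e3 + e1)^2; c \<le> (e1 + e2)^2\<rbrakk>
      \<Longrightarrow> c * (1 + trace (QE R1 R2)) * (3 - trace (QE R1 R2))
          \<le> 16 * (norm (eRE (diag3 e1 e2 e3) R1 R2))^2"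
    and "\<lbrakk>(e2 + e3)^2 \<le> C; (e3 + e1)^2 \<le> C; (e1 + e2)^2 \<le> C;
          (e2 - e3)^2 \<le> D; (e3 - e1)^2 \<le> D; (e1 - e2)^2 \<le> D\<rbrakk>
      \<Longrightarrow> 16 * (norm (eRE (diag3 e1 e2 e3) R1 R2))^2 \<le> 4 * (C + D) * (3 - trace (QE R1 R2))"
proof -
  define w where "w = rodrigues_weight (QE R1 R2)"
  define x0 where "x0 = 1 + trace (QE R1 R2)"
  define S where "S = 3 - trace (QE R1 R2)"
  have w: "0 \<le> w 1" "0 \<le> w 2" "0 \<le> w 3"
    unfolding w_def by (simp_all add: SO3_rodrigues_weight_nonneg[OF Q])
  have S: "S = w 1 + w 2 + w 3"
    unfolding S_def w_def by (rule sum_rodrigues_weight[symmetric])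
  have x0: "0 \<le> x0" "x0 = 4 - S"
    using SO3_rodrigues_weight_nonneg(1)[OF Q] unfolding x0_def S_def by simp_all
  have w_le_4: "w 1 \<le> 4" "w 2 \<le> 4" "w 3 \<le> 4"
    using w x0 unfolding S by linarith+
  note E = norm_eRE_diag3_rodrigues[OF Q, folded w_def x0_def]
  show "c * (1 + trace (QE R1 R2)) * (3 - trace (QE R1 R2))
      \<le> 16 * (norm (eRE (diag3 e1 e2 e3) R1 R2))^2"
    if "c \<le> (e2 + e3)^2" "c \<le> (e3 + e1)^2" "c \<le> (e1 + e2)^2"
  proof -
    have "c * S \<le> (e2 + e3)^2 * w 1 + (e3 + e1)^2 * w 2 + (e1 + e2)^2 * w 3"
      using mult_right_mono[OF that(1) w(1)] mult_right_mono[OF that(2) w(2)]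
        mult_right_mono[OF that(3) w(3)]
      unfolding S by (simp add: algebra_simps)
    then have "x0 * (c * S) \<le> x0 * ((e2 + e3)^2 * w 1 + (e3 + e1)^2 * w 2 + (e1 + e2)^2 * w 3)"
      using x0(1) by (rule mult_left_mono)
    moreover have "0 \<le> (e2 - e3)^2 * (w 2 * w 3) + (e3 - e1)^2 * (w 3 * w 1) + (e1 - e2)^2 * (w 1 * w 2)"
      using w by simp
    ultimately show ?thesis
      unfolding E x0_def[symmetric] S_def[symmetric] by (simp add: algebra_simps)
  qed
  show "16 * (norm (eRE (diag3 e1 e2 e3) R1 R2))^2 \<le> 4 * (C + D) * (3 - trace (QE R1 R2))"
    if h: "(e2 + e3)^2 \<le> C" "(e3 + e1)^2 \<le> C" "(e1 + e2)^2 \<le> C"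
      and d: "(e2 - e3)^2 \<le> D" "(e3 - e1)^2 \<le> D" "(e1 - e2)^2 \<le> D"
  proof -
    have "(e2 + e3)^2 * w 1 + (e3 + e1)^2 * w 2 + (e1 + e2)^2 * w 3 \<le> C * S"
      using mult_right_mono[OF h(1) w(1)] mult_right_mono[OF h(2) w(2)] mult_right_mono[OF h(3) w(3)]
      unfolding S by (simp add: algebra_simps)
    then have "x0 * ((e2 + e3)^2 * w 1 + (e3 + e1)^2 * w 2 + (e1 + e2)^2 * w 3) \<le> x0 * (C * S)"
      using x0(1) by (rule mult_left_mono)
    also have "\<dots> \<le> 4 * (C * S)"
      using x0 w order_trans[OF zero_le_power2 h(1)] unfolding S by (intro mult_right_mono) auto
    finally have skew: "x0 * ((e2 + e3)^2 * w 1 + (e3 + e1)^2 * w 2 + (e1 + e2)^2 * w 3) \<le> 4 * (C * S)" .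
    have "w 2 * w 3 + w 3 * w 1 + w 1 * w 2 \<le> w 2 * 4 + w 3 * 4 + w 1 * 4"
      using mult_left_mono[OF w_le_4(3) w(2)] mult_left_mono[OF w_le_4(1) w(3)]
        mult_left_mono[OF w_le_4(2) w(1)] by linarith
    then have "w 2 * w 3 + w 3 * w 1 + w 1 * w 2 \<le> 4 * S"
      unfolding S by simp
    moreover have "(e2 - e3)^2 * (w 2 * w 3) + (e3 - e1)^2 * (w 3 * w 1) + (e1 - e2)^2 * (w 1 * w 2)
        \<le> D * (w 2 * w 3 + w 3 * w 1 + w 1 * w 2)"
      using mult_right_mono[OF d(1), of "w 2 * w 3"] mult_right_mono[OF d(2), of "w 3 * w 1"]
        mult_right_mono[OF d(3), of "w 1 * w 2"] w by (simp add: algebra_simps)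
    moreover have "0 \<le> D"
      using d(1) zero_le_power2 order_trans by blast
    ultimately have sym: "(e2 - e3)^2 * (w 2 * w 3) + (e3 - e1)^2 * (w 3 * w 1) + (e1 - e2)^2 * (w 1 * w 2)
        \<le> D * (4 * S)"
      by (meson mult_left_mono order_trans)
    show ?thesis
      using skew sym unfolding E S_def[symmetric] by (simp add: algebra_simps)
  qed
qed

lemma PsiE_diag3_pos_def:
  fixes R1 R2 :: "real^3^3"
  assumes Q: "QE R1 R2 \<in> SO3" and pos: "0 < e2 + e3" "0 < e3 + e1" "0 < e1 + e2"
  shows "0 \<le> PsiE (diag3 e1 e2 e3) R1 R2"
    and "PsiE (diag3 e1 e2 e3) R1 R2 = 0 \<longleftrightarrow> QE R1 R2 = mat 1"
proof -
  define c where "c = min (min (e2 + e3) (e3 + e1)) (e1 + e2)"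
  define C where "C = max (max (e2 + e3) (e3 + e1)) (e1 + e2)"
  have "0 < c" using pos unfolding c_def by simp
  have S: "0 \<le> 3 - trace (QE R1 R2)" using SO3_trace_le_3[OF Q] by simp
  have lower: "c * (3 - trace (QE R1 R2)) \<le> 4 * PsiE (diag3 e1 e2 e3) R1 R2"
    by (rule PsiE_diag3_trace_bounds(1)[OF Q]) (simp_all add: c_def)
  have upper: "4 * PsiE (diag3 e1 e2 e3) R1 R2 \<le> C * (3 - trace (QE R1 R2))"
    by (rule PsiE_diag3_trace_bounds(2)[OF Q]) (simp_all add: C_def)
  show "0 \<le> PsiE (diag3 e1 e2 e3) R1 R2"
    using lower S \<open>0 < c\<close> by (smt (verit) mult_nonneg_nonneg)
  have "PsiE (diag3 e1 e2 e3) R1 R2 = 0 \<longleftrightarrow> trace (QE R1 R2) = 3"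
  proof
    assume "PsiE (diag3 e1 e2 e3) R1 R2 = 0"
    then have "c * (3 - trace (QE R1 R2)) \<le> 0" using lower by simp
    then show "trace (QE R1 R2) = 3" using S \<open>0 < c\<close> by (simp add: mult_le_0_iff)
  next
    assume "trace (QE R1 R2) = 3"
    then show "PsiE (diag3 e1 e2 e3) R1 R2 = 0"
      using lower upper by simp
  qed
  then show "PsiE (diag3 e1 e2 e3) R1 R2 = 0 \<longleftrightarrow> QE R1 R2 = mat 1"
    using SO3_eq_mat_1_iff_trace[OF Q] by simp
qed

lemma PsiE_diag3_ge_norm_eRE:
  fixes R1 R2 :: "real^3^3"
  assumes Q: "QE R1 R2 \<in> SO3"
    and n1: "0 < n1" "n1 \<le> e2 + e3" "n1 \<le> e3 + e1" "n1 \<le> e1 + e2"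
    and n2: "(e2 - e3)^2 \<le> n2" "(e3 - e1)^2 \<le> n2" "(e1 - e2)^2 \<le> n2"
    and n3: "(e2 + e3)^2 \<le> n3" "(e3 + e1)^2 \<le> n3" "(e1 + e2)^2 \<le> n3"
  shows "n1 / (n2 + n3) * (norm (eRE (diag3 e1 e2 e3) R1 R2))^2 \<le> PsiE (diag3 e1 e2 e3) R1 R2"
proof -
  define S where "S = 3 - trace (QE R1 R2)"
  have "0 < n3" using n1(1,2) n3(1) by (smt (verit) power_strict_mono zero_less_power2 zero_less_numeral)
  moreover have "0 \<le> n2" using n2(1) zero_le_power2 order_trans by blast
  ultimately have "0 < n2 + n3" by simp
  have "n1 / (n2 + n3) * (norm (eRE (diag3 e1 e2 e3) R1 R2))^2 \<le> n1 / (n2 + n3) * ((n2 + n3) * S / 4)"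
    using norm_eRE_diag3_trace_bounds(2)[OF Q n3 n2] \<open>0 < n2 + n3\<close> n1(1)
    unfolding S_def by (intro mult_left_mono) (simp_all add: algebra_simps)
  also have "\<dots> = n1 * S / 4" using \<open>0 < n2 + n3\<close> by simp
  also have "\<dots> \<le> PsiE (diag3 e1 e2 e3) R1 R2"
    using PsiE_diag3_trace_bounds(1)[OF Q n1(2-4)] unfolding S_def by simp
  finally show ?thesis .
qed

lemma PsiE_diag3_le_norm_eRE:
  fixes R1 R2 :: "real^3^3"
  assumes Q: "QE R1 R2 \<in> SO3"
    and n1: "0 < n1" "n1 \<le> e2 + e3" "n1 \<le> e3 + e1" "n1 \<le> e1 + e2"
    and n4: "e2 + e3 \<le> n4" "e3 + e1 \<le> n4" "e1 + e2 \<le> n4"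
    and n5: "0 < n5" "n5 \<le> (e2 + e3)^2" "n5 \<le> (e3 + e1)^2" "n5 \<le> (e1 + e2)^2"
    and \<psi>: "PsiE (diag3 e1 e2 e3) R1 R2 < \<psi>" "\<psi> < n1"
  shows "PsiE (diag3 e1 e2 e3) R1 R2
    \<le> n1 * n4 / (n5 * (n1 - \<psi>)) * (norm (eRE (diag3 e1 e2 e3) R1 R2))^2"
proof -
  define S where "S = 3 - trace (QE R1 R2)"
  define \<Psi> where "\<Psi> = PsiE (diag3 e1 e2 e3) R1 R2"
  define E where "E = (norm (eRE (diag3 e1 e2 e3) R1 R2))^2"
  have "0 \<le> S" using SO3_trace_le_3[OF Q] unfolding S_def by simp
  have "0 < n4" using n1 n4 by linarith
  have "0 < n5 * (n1 - \<psi>)" using n5(1) \<psi>(2) by simp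
  have lower: "n1 * S \<le> 4 * \<Psi>" and upper: "4 * \<Psi> \<le> n4 * S"
    using PsiE_diag3_trace_bounds[OF Q] n1 n4 unfolding S_def \<Psi>_def by auto
  have E: "n5 * ((4 - S) * S) \<le> 16 * E"
    using norm_eRE_diag3_trace_bounds(1)[OF Q n5(2-4)] unfolding S_def E_def
    by (simp add: algebra_simps)
  \<comment> \<open>the sublevel condition keeps \<open>S = 4 sin\<^sup>2(\<theta>/2)\<close> away from \<open>4\<close>\<close>
  have angle: "4 * (n1 - \<psi>) \<le> n1 * (4 - S)"
    using lower \<psi>(1) unfolding \<Psi>_def by (simp add: algebra_simps)
  have "16 * \<Psi> * (n5 * (n1 - \<psi>)) \<le> 4 * (n4 * S) * (n5 * (n1 - \<psi>))"
    using mult_right_mono[OF upper, of "4 * (n5 * (n1 - \<psi>))"] \<open>0 < n5 * (n1 - \<psi>)\<close>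
    by (simp add: algebra_simps)
  also have "\<dots> = (n4 * n5 * S) * (4 * (n1 - \<psi>))" by (simp add: algebra_simps)
  also have "\<dots> \<le> (n4 * n5 * S) * (n1 * (4 - S))"
    using angle \<open>0 < n4\<close> n5(1) \<open>0 \<le> S\<close> by (intro mult_left_mono) simp_all
  also have "\<dots> = n1 * n4 * (n5 * ((4 - S) * S))" by (simp add: algebra_simps)
  also have "\<dots> \<le> n1 * n4 * (16 * E)"
    using E n1(1) \<open>0 < n4\<close> by (intro mult_left_mono) simp_all
  finally have "\<Psi> * (n5 * (n1 - \<psi>)) \<le> n1 * n4 * E" by simp
  then show ?thesis
    using \<open>0 < n5 * (n1 - \<psi>)\<close> unfolding \<Psi>_def E_def by (simp add: field_simps)
qed

section \<open>Error kinematics\<close>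

lemma bounded_bilinear_matrix_matrix_mult:
  "bounded_bilinear ((**) :: real^'n^'m \<Rightarrow> real^'p^'n \<Rightarrow> real^'p^'m)"
  unfolding bilinear_conv_bounded_bilinear[symmetric] bilinear_def linear_iff
  by (simp add: vec_eq_iff matrix_matrix_mult_def sum.distrib sum_distrib_left algebra_simps)

lemma bounded_linear_transpose: "bounded_linear (transpose :: real^'n^'m \<Rightarrow> real^'m^'n)"
  unfolding linear_conv_bounded_linear[symmetric] linear_iff
  by (simp add: vec_eq_iff transpose_def)

lemma bounded_linear_trace: "bounded_linear (trace :: real^'n^'n \<Rightarrow> real)"
  unfolding linear_conv_bounded_linear[symmetric] linear_iff
  by (simp add: trace_def sum.distrib sum_distrib_left)

lemma bounded_linear_vee: "bounded_linear vee"
  unfolding linear_conv_bounded_linear[symmetric] linear_iff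
  by (simp add: vec_eq_iff forall_3 vee_def)

lemma hat_mult_vec: "hat x *v y = cross3 x y"
  by (simp add: vec_eq_iff forall_3 hat_def matrix_vector_mult_def sum_3 cross3_def axis_def algebra_simps)

lemma transpose_hat: "transpose (hat x) = - hat x"
  by (simp add: vec_eq_iff forall_3 hat_def transpose_def cross3_def axis_def)

lemma hat_diff: "hat (x - y) = hat x - hat y"
  by (simp add: vec_eq_iff forall_3 hat_def cross3_def axis_def)

lemma hat_scaleR: "hat (c *\<^sub>R x) = c *\<^sub>R hat x"
  by (simp add: vec_eq_iff forall_3 hat_def cross3_def axis_def)

lemma hat_vee_skew: "hat (vee (M - transpose M)) = M - transpose M"
  by (simp add: vec_eq_iff forall_3 vee_def hat_def transpose_def cross3_def axis_def)

lemma trace_hat_mult: "trace (hat w ** M) = - (w \<bullet> vee (M - transpose M))"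
  by (simp add: trace_def inner_vec_def vee_def hat_def transpose_def matrix_matrix_mult_def
      sum_3 cross3_def axis_def algebra_simps)

lemma vee_hat_mult_add: "vee (hat w ** M + transpose M ** hat w) = (trace M *\<^sub>R mat 1 - M) *v w"
  by (simp add: vec_eq_iff forall_3 trace_def vee_def hat_def transpose_def matrix_matrix_mult_def
      matrix_vector_mult_def mat_def sum_3 cross3_def axis_def algebra_simps)

lemma rotation_matrix_hat_conj:
  assumes "rotation_matrix Q"
  shows "Q ** hat (transpose Q *v v) = hat v ** Q"
proof (rule matrix_eq[THEN iffD2], intro allI)
  fix y
  have "Q *v (transpose Q *v v) = v"
    using assms unfolding rotation_matrix_def orthogonal_matrix_def
    by (simp add: matrix_vector_mul_assoc del: transpose_matrix_vector)
  then have "Q *v (cross3 (transpose Q *v v) y) = cross3 v (Q *v y)"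
    using cross_rotation_matrix[OF assms] by metis
  then show "(Q ** hat (transpose Q *v v)) *v y = (hat v ** Q) *v y"
    by (simp add: matrix_vector_mul_assoc[symmetric] hat_mult_vec)
qed

lemma eRE_sym:
  assumes "transpose G = G"
  shows "eRE G R Rb = (1/2) *\<^sub>R vee (QE R Rb ** G - transpose (QE R Rb ** G))"
  by (simp add: eRE_def matrix_transpose_mul assms)

lemma Eo_sym:
  assumes "transpose G = G"
  shows "Eo G R Rb = (1/2) *\<^sub>R (trace (QE R Rb ** G) *\<^sub>R mat 1 - QE R Rb ** G)"
  unfolding Eo_def eRE_sym[OF assms] hat_scaleR hat_vee_skew
  by (simp add: matrix_transpose_mul assms)

lemma has_vector_derivative_QE:
  assumes R: "(R has_vector_derivative hat \<omega> ** R t) (at t)"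
    and Rb: "(Rb has_vector_derivative hat (transpose (QE (R t) (Rb t)) *v v) ** Rb t) (at t)"
    and Q: "QE (R t) (Rb t) \<in> SO3"
  shows "((\<lambda>s. QE (R s) (Rb s)) has_vector_derivative hat (\<omega> - v) ** QE (R t) (Rb t)) (at t)"
proof -
  define Q where "Q = QE (R t) (Rb t)"
  have "((\<lambda>s. R s ** transpose (Rb s)) has_vector_derivative
      R t ** transpose (hat (transpose Q *v v) ** Rb t) + (hat \<omega> ** R t) ** transpose (Rb t)) (at t)"
    using bounded_bilinear.has_vector_derivative[OF bounded_bilinear_matrix_matrix_mult R
        bounded_linear.has_vector_derivative[OF bounded_linear_transpose Rb]]
    unfolding Q_def .
  moreover have "R t ** transpose (hat (transpose Q *v v) ** Rb t) = - (hat v ** Q)"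
    using rotation_matrix_hat_conj[of Q v] Q
    by (simp add: Q_def QE_def SO3_iff_rotation_matrix matrix_transpose_mul transpose_hat
        matrix_mul_assoc bounded_bilinear.minus_right[OF bounded_bilinear_matrix_matrix_mult])
  moreover have "(hat \<omega> ** R t) ** transpose (Rb t) = hat \<omega> ** Q"
    by (simp add: Q_def QE_def matrix_mul_assoc)
  ultimately show ?thesis
    unfolding QE_def Q_def hat_diff bounded_bilinear.diff_left[OF bounded_bilinear_matrix_matrix_mult]
    by simp
qed

lemma has_real_derivative_PsiE:
  assumes G: "transpose G = G"
    and Q: "((\<lambda>s. QE (R s) (Rb s)) has_vector_derivative hat w ** QE (R t) (Rb t)) (at t)"
  shows "((\<lambda>s. PsiE G (R s) (Rb s)) has_real_derivative w \<bullet> eRE G (R t) (Rb t)) (at t)"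
proof -
  have Psi: "PsiE G R1 R2 = (1/2) * trace G - (1/2) * trace (G ** QE R1 R2)" for R1 R2
    by (simp add: PsiE_def bounded_bilinear.diff_right[OF bounded_bilinear_matrix_matrix_mult]
        trace_sub algebra_simps)
  have "trace (G ** (hat w ** QE (R t) (Rb t))) = - 2 * (w \<bullet> eRE G (R t) (Rb t))"
    by (simp add: trace_mul_sym[of G] matrix_mul_assoc[symmetric] trace_hat_mult eRE_sym[OF G])
  moreover have "((\<lambda>s. trace (G ** QE (R s) (Rb s))) has_vector_derivative
      trace (G ** (hat w ** QE (R t) (Rb t)))) (at t)"
    using bounded_linear.has_vector_derivative[OF bounded_linear_trace
        bounded_bilinear.has_vector_derivative[OF bounded_bilinear_matrix_matrix_mult
          has_vector_derivative_const Q]]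
    by simp
  ultimately show ?thesis
    unfolding Psi has_real_derivative_iff_has_vector_derivative
    by (auto intro!: derivative_eq_intros)
qed

lemma has_vector_derivative_eRE:
  assumes G: "transpose G = G"
    and Q: "((\<lambda>s. QE (R s) (Rb s)) has_vector_derivative hat w ** QE (R t) (Rb t)) (at t)"
  shows "((\<lambda>s. eRE G (R s) (Rb s)) has_vector_derivative Eo G (R t) (Rb t) *v w) (at t)"
proof -
  define A where "A = QE (R t) (Rb t) ** G"
  have "((\<lambda>s. QE (R s) (Rb s) ** G) has_vector_derivative hat w ** A) (at t)"
    using bounded_bilinear.has_vector_derivative[OF bounded_bilinear_matrix_matrix_mult Q
        has_vector_derivative_const]
    by (simp add: A_def matrix_mul_assoc)
  then have "((\<lambda>s. (1/2) *\<^sub>R vee (QE (R s) (Rb s) ** G - transpose (QE (R s) (Rb s) ** G)))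
      has_vector_derivative (1/2) *\<^sub>R vee (hat w ** A - transpose (hat w ** A))) (at t)"
    by (intro bounded_linear.has_vector_derivative[OF bounded_linear_vee]
        bounded_linear.has_vector_derivative[OF bounded_linear_scaleR_right] has_vector_derivative_diff
        bounded_linear.has_vector_derivative[OF bounded_linear_transpose])
  also have "hat w ** A - transpose (hat w ** A) = hat w ** A + transpose A ** hat w"
    by (simp add: matrix_transpose_mul transpose_hat
        bounded_bilinear.minus_right[OF bounded_bilinear_matrix_matrix_mult])
  finally show ?thesis
    unfolding eRE_sym[OF G] Eo_sym[OF G] vee_hat_mult_add A_def
    by (simp add: scaleR_matrix_vector_assoc)
qed

lemma transpose_diag3: "transpose (diag3 a b c) = diag3 a b c"
  by (simp add: vec_eq_iff transpose_def diag3_def)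

theorem proposition1:
  fixes J0 :: "real^3^3" and \<epsilon>1 \<epsilon>2 \<epsilon>3 kE kv \<psi>E :: real
    and T :: "real set"
    and R Rb :: "real \<Rightarrow> real^3^3"
    and \<omega> \<Omega> \<omega>b \<tau> :: "real \<Rightarrow> real^3"
    and J :: "real \<Rightarrow> real^3^3"
  defines "G \<equiv> diag3 \<epsilon>1 \<epsilon>2 \<epsilon>3"
    and "n1 \<equiv> Min {\<epsilon>1 + \<epsilon>2, \<epsilon>2 + \<epsilon>3, \<epsilon>3 + \<epsilon>1}"
    and "n2 \<equiv> Max {(\<epsilon>1 - \<epsilon>2)^2, (\<epsilon>2 - \<epsilon>3)^2, (\<epsilon>3 - \<epsilon>1)^2}"
    and "n3 \<equiv> Max {(\<epsilon>1 + \<epsilon>2)^2, (\<epsilon>2 + \<epsilon>3)^2, (\<epsilon>3 + \<epsilon>1)^2}"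
    and "n4 \<equiv> Max {\<epsilon>1 + \<epsilon>2, \<epsilon>2 + \<epsilon>3, \<epsilon>3 + \<epsilon>1}"
    and "n5 \<equiv> Min {(\<epsilon>1 + \<epsilon>2)^2, (\<epsilon>2 + \<epsilon>3)^2, (\<epsilon>3 + \<epsilon>1)^2}"
  assumes J0_sym: "transpose J0 = J0"
    and J0_pd: "\<And>x. x \<noteq> 0 \<Longrightarrow> x \<bullet> (J0 *v x) > 0"
    and eps_pos: "\<epsilon>1 > 0" "\<epsilon>2 > 0" "\<epsilon>3 > 0"
    and eps_dist: "\<epsilon>1 \<noteq> \<epsilon>2" "\<epsilon>2 \<noteq> \<epsilon>3" "\<epsilon>3 \<noteq> \<epsilon>1"
    and gains: "kE > 0" "kv > 0"
    and psi_bound: "\<psi>E < n1"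
    and T_open: "open T"
    and J_def: "\<And>t. J t = R t ** J0 ** transpose (R t)"
    and R_SO3: "\<And>t. t \<in> T \<Longrightarrow> R t \<in> SO3"
    and Rb_SO3: "\<And>t. t \<in> T \<Longrightarrow> Rb t \<in> SO3"
    and dyn_mom: "\<And>t. t \<in> T \<Longrightarrow> ((\<lambda>s. J s *v \<omega> s) has_vector_derivative \<tau> t) (at t)"
    and dyn_R1: "\<And>t. t \<in> T \<Longrightarrow> (R has_vector_derivative (hat (\<omega> t) ** R t)) (at t)"
    and dyn_R2: "\<And>t. t \<in> T \<Longrightarrow> hat (\<omega> t) ** R t = R t ** hat (\<Omega> t)"
    and obs_mom: "\<And>t. t \<in> T \<Longrightarrow> ((\<lambda>s. J s *v \<omega>b s) has_vector_derivative
                    (\<tau> t + ((1/2) * kE) *\<^sub>R (matrix_inv (J t) *v eRE G (R t) (Rb t)))) (at t)"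
    and obs_R: "\<And>t. t \<in> T \<Longrightarrow> (Rb has_vector_derivative
                    (hat (transpose (QE (R t) (Rb t)) *v
                        (\<omega>b t + kv *\<^sub>R (matrix_inv (J t) *v eRE G (R t) (Rb t)))) ** Rb t)) (at t)"
  shows
    \<comment> \<open>(i)\<close>
    "(\<forall>R1 \<in> SO3. \<forall>R2 \<in> SO3. PsiE G R1 R2 \<ge> 0 \<and> (PsiE G R1 R2 = 0 \<longleftrightarrow> QE R1 R2 = mat 1))
     \<comment> \<open>(ii)\<close>
   \<and> (\<forall>R1 \<in> SO3. \<forall>R2 \<in> SO3.
        n1 / (n2 + n3) * (norm (eRE G R1 R2))^2 \<le> PsiE G R1 R2
      \<and> (PsiE G R1 R2 < \<psi>E \<longrightarrow>
           PsiE G R1 R2 \<le> n1 * n4 / (n5 * (n1 - \<psi>E)) * (norm (eRE G R1 R2))^2))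
     \<comment> \<open>(iii)--(vi)\<close>
   \<and> (\<forall>t \<in> T.
        let \<omega>E = \<omega> t - \<omega>b t - kv *\<^sub>R (matrix_inv (J t) *v eRE G (R t) (Rb t)) in
          ((\<lambda>s. QE (R s) (Rb s)) has_vector_derivative (hat \<omega>E ** QE (R t) (Rb t))) (at t)
        \<and> ((\<lambda>s. PsiE G (R s) (Rb s)) has_real_derivative (\<omega>E \<bullet> eRE G (R t) (Rb t))) (at t)
        \<and> ((\<lambda>s. eRE G (R s) (Rb s)) has_vector_derivative (Eo G (R t) (Rb t) *v \<omega>E)) (at t)
        \<and> ((\<lambda>s. J s *v \<omega> s - J s *v \<omega>b s) has_vector_derivative
             (- ((1/2) * kE) *\<^sub>R (matrix_inv (J t) *v eRE G (R t) (Rb t)))) (at t))"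
proof -
  have G_sym: "transpose G = G" unfolding G_def by (rule transpose_diag3)
  have pos: "0 < \<epsilon>2 + \<epsilon>3" "0 < \<epsilon>3 + \<epsilon>1" "0 < \<epsilon>1 + \<epsilon>2" using eps_pos by simp_all
  have n: "0 < n1" "n1 \<le> \<epsilon>2 + \<epsilon>3" "n1 \<le> \<epsilon>3 + \<epsilon>1" "n1 \<le> \<epsilon>1 + \<epsilon>2"
    "(\<epsilon>2 - \<epsilon>3)^2 \<le> n2" "(\<epsilon>3 - \<epsilon>1)^2 \<le> n2" "(\<epsilon>1 - \<epsilon>2)^2 \<le> n2"
    "(\<epsilon>2 + \<epsilon>3)^2 \<le> n3" "(\<epsilon>3 + \<epsilon>1)^2 \<le> n3" "(\<epsilon>1 + \<epsilon>2)^2 \<le> n3"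
    "\<epsilon>2 + \<epsilon>3 \<le> n4" "\<epsilon>3 + \<epsilon>1 \<le> n4" "\<epsilon>1 + \<epsilon>2 \<le> n4"
    "0 < n5" "n5 \<le> (\<epsilon>2 + \<epsilon>3)^2" "n5 \<le> (\<epsilon>3 + \<epsilon>1)^2" "n5 \<le> (\<epsilon>1 + \<epsilon>2)^2"
    using eps_pos unfolding n1_def n2_def n3_def n4_def n5_def by auto
  define \<omega>E where "\<omega>E t = \<omega> t - \<omega>b t - kv *\<^sub>R (matrix_inv (J t) *v eRE G (R t) (Rb t))" for t
  have dQ: "((\<lambda>s. QE (R s) (Rb s)) has_vector_derivative hat (\<omega>E t) ** QE (R t) (Rb t)) (at t)"
    if t: "t \<in> T" for t
    using has_vector_derivative_QE[OF dyn_R1[OF t] obs_R[OF t] QE_in_SO3[OF R_SO3[OF t] Rb_SO3[OF t]]]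
    unfolding \<omega>E_def by (simp add: algebra_simps)
  have dJ: "((\<lambda>s. J s *v \<omega> s - J s *v \<omega>b s) has_vector_derivative
      - ((1/2) * kE) *\<^sub>R (matrix_inv (J t) *v eRE G (R t) (Rb t))) (at t)" if t: "t \<in> T" for t
    using has_vector_derivative_diff[OF dyn_mom[OF t] obs_mom[OF t]] by simp
  show ?thesis
    unfolding Let_def \<omega>E_def[symmetric]
    using PsiE_diag3_pos_def[OF QE_in_SO3 pos] PsiE_diag3_ge_norm_eRE[OF QE_in_SO3 n(1-10)]
      PsiE_diag3_le_norm_eRE[OF QE_in_SO3 n(1-4) n(11-17) _ psi_bound]
      dQ has_real_derivative_PsiE[OF G_sym dQ] has_vector_derivative_eRE[OF G_sym dQ] dJ
    unfolding G_def by blast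
qed

end
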